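(* Let $n\in\mathbb{N}$. The space $\mathcal{C}^n[a,b]$ consists exactly of those functions $f$ on $[a,b]$ that can be represented in the form $$f(x)=\frac{1}{(n-1)!}\int_a^x(x-t)^{n-1}\phi(t)\,dt+\sum_{k=0}^{n-1}c_k(x-a)^k,\qquad x\in[a,b],$$ where $\phi\in D_{HK}$ and $c_0,\dots,c_{n-1}$ are arbitrary real constants.
   Context: Fix real numbers $a<b$. Let $C_0=\{F\in C[a,b]:F(a)=0\}$. A distribution $\phi$ on $(a,b)$ is Henstock–Kurzweil integrable if $\phi=F'$ (distributional derivative) for some (unique) $F\in C_0$; its distributional Henstock–Kurzweil integral is $\int_c^d \phi=F(d)-F(c)$, and integrals of $\phi$ against functions of bounded variation (such as $t\mapsto(x-t)^{n-1}$) are defined via $\int_a^x\phi g=F(x)g(x)-\int_a^xF\,dg$. $D_{HK}$ denotes the space of such distributions. For $n\in\mathbb{N}$, $\mathcal{C}^n[a,b]$ is the set of functions $F$ on $[a,b]$ whose classical derivative $F^{(n-1)}=\left(\frac{d}{dx}\right)^{n-1}F$ exists and is continuous on $[a,b]$ (so $\mathcal{C}^1[a,b]=C[a,b]$). *)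

theory Defs
  imports "HOL-Analysis.Analysis"
begin

definition test_fun :: "real \<Rightarrow> real \<Rightarrow> (real \<Rightarrow> real) \<Rightarrow> bool" where
  "test_fun a b \<psi> \<longleftrightarrow>
     (\<forall>k x. ((deriv ^^ k) \<psi>) differentiable (at x)) \<and>
     (\<exists>c d. a < c \<and> c \<le> d \<and> d < b \<and> (\<forall>x. x \<notin> {c..d} \<longrightarrow> \<psi> x = 0))"

type_synonym distr = "(real \<Rightarrow> real) \<Rightarrow> real"

definition C0 :: "real \<Rightarrow> real \<Rightarrow> (real \<Rightarrow> real) set" where
  "C0 a b = {F. continuous_on {a..b} F \<and> F a = 0}"

definition distr_primitive :: "real \<Rightarrow> real \<Rightarrow> distr \<Rightarrow> (real \<Rightarrow> real) \<Rightarrow> bool" where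
  "distr_primitive a b T F \<longleftrightarrow> F \<in> C0 a b \<and>
     (\<forall>\<psi>. test_fun a b \<psi> \<longrightarrow> T \<psi> = - integral {a..b} (\<lambda>x. F x * deriv \<psi> x))"

definition D_HK :: "real \<Rightarrow> real \<Rightarrow> distr set" where
  "D_HK a b = {T. \<exists>F. distr_primitive a b T F}"

text \<open>Integral of T against g over [a,x]:  F(x) g(x) - \<integral>_a^x F dg, where for the
  (continuously differentiable) integrands used here the Stieltjes integral
  \<integral>_a^x F dg is written as \<integral>_a^x F(t) g'(t) dt.\<close>
definition hk_int_mult :: "real \<Rightarrow> real \<Rightarrow> distr \<Rightarrow> (real \<Rightarrow> real) \<Rightarrow> real \<Rightarrow> real" where
  "hk_int_mult a b T g x = (THE v. \<exists>F. distr_primitive a b T F \<and>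
       v = F x * g x - integral {a..x} (\<lambda>t. F t * deriv g t))"

definition Cn :: "real \<Rightarrow> real \<Rightarrow> nat \<Rightarrow> (real \<Rightarrow> real) \<Rightarrow> bool" where
  "Cn a b n f \<longleftrightarrow> (\<exists>D :: nat \<Rightarrow> real \<Rightarrow> real.
      (\<forall>x\<in>{a..b}. D 0 x = f x) \<and>
      (\<forall>k. k + 1 < n \<longrightarrow> (\<forall>x\<in>{a..b}. (D k has_real_derivative D (Suc k) x) (at x within {a..b}))) \<and>
      continuous_on {a..b} (D (n - 1)))"

end

theory Submission
  imports Defs "HOL-Computational_Algebra.Polynomial"
begin

text \<open>
  Let \<open>n = m + 1\<close> and let \<open>F \<in> C\<^sub>0\<close> be the primitive of \<open>\<phi>\<close>. Integration by parts turns
  \<open>(1/m!) \<integral>\<^sub>a\<^sup>x (x - t)\<^sup>m \<phi>(t) dt\<close> into \<open>(1/(m-1)!) \<integral>\<^sub>a\<^sup>x (x - t)\<^sup>m\<^sup>-\<^sup>1 F(t) dt\<close>, which by Cauchy's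
  formula for repeated integration is the \<open>m\<close>-fold primitive \<open>I\<^sup>m F\<close> of \<open>F\<close> from \<open>a\<close>. So the
  representation says that \<open>f\<close> is \<open>I\<^sup>m F\<close> plus a polynomial of degree \<open>< n\<close>; such an \<open>f\<close> has the
  derivatives \<open>I\<^sup>m\<^sup>-\<^sup>k F\<close> plus polynomials, the last one continuous. Conversely, for \<open>f \<in> \<C>\<^sup>n\<close>
  Taylor's formula with integral remainder, applied after splitting \<open>f\<^sup>(\<^sup>m\<^sup>) = F + f\<^sup>(\<^sup>m\<^sup>)(a)\<close>,
  gives the representation.

  The distributional integral is well defined because a distribution has at most one
  primitive in \<open>C\<^sub>0\<close>. This is the du Bois-Reymond lemma: a continuous \<open>G\<close> with
  \<open>\<integral> G \<psi>' = 0\<close> for all test functions \<open>\<psi>\<close> is constant, as one sees by taking for \<open>\<psi>\<close> a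
  difference of two narrow smooth steps at \<open>c\<close> and \<open>d\<close>, built from \<open>exp (-1/t)\<close>, so that
  \<open>\<integral> G \<psi>'\<close> approximates a multiple of \<open>G c - G d\<close>.
\<close>

section \<open>Smooth bump functions\<close>

definition differentiable_upto :: "nat \<Rightarrow> (real \<Rightarrow> real) \<Rightarrow> bool" where
  "differentiable_upto k f \<longleftrightarrow>
     (\<exists>D. D 0 = f \<and> (\<forall>j<k. \<forall>x. (D j has_real_derivative D (Suc j) x) (at x)))"

lemma differentiable_upto_0 [simp]: "differentiable_upto 0 f"
  unfolding differentiable_upto_def by auto

lemma differentiable_upto_Suc:
  "differentiable_upto (Suc k) f \<longleftrightarrow>
     (\<exists>f'. (\<forall>x. (f has_real_derivative f' x) (at x)) \<and> differentiable_upto k f')"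
proof
  assume "differentiable_upto (Suc k) f"
  then obtain D where "D 0 = f" "\<forall>j<Suc k. \<forall>x. (D j has_real_derivative D (Suc j) x) (at x)"
    unfolding differentiable_upto_def by blast
  then show "\<exists>f'. (\<forall>x. (f has_real_derivative f' x) (at x)) \<and> differentiable_upto k f'"
    unfolding differentiable_upto_def by (auto intro!: exI[of _ "D 1"] exI[of _ "\<lambda>j. D (Suc j)"])
next
  assume "\<exists>f'. (\<forall>x. (f has_real_derivative f' x) (at x)) \<and> differentiable_upto k f'"
  then obtain f' D where "\<forall>x. (f has_real_derivative f' x) (at x)" "D 0 = f'"
    "\<forall>j<k. \<forall>x. (D j has_real_derivative D (Suc j) x) (at x)"
    unfolding differentiable_upto_def by blast
  then show "differentiable_upto (Suc k) f"
    unfolding differentiable_upto_def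
    by (intro exI[of _ "\<lambda>j. case j of 0 \<Rightarrow> f | Suc i \<Rightarrow> D i"]) (auto simp: less_Suc_eq_0_disj)
qed

lemma differentiable_upto_SucD: "differentiable_upto (Suc k) f \<Longrightarrow> differentiable_upto k f"
  unfolding differentiable_upto_def by auto

lemma differentiable_upto_add:
  assumes "differentiable_upto k f" "differentiable_upto k g"
  shows "differentiable_upto k (\<lambda>x. f x + g x)"
proof -
  obtain D E where "D 0 = f" "\<forall>j<k. \<forall>x. (D j has_real_derivative D (Suc j) x) (at x)"
    "E 0 = g" "\<forall>j<k. \<forall>x. (E j has_real_derivative E (Suc j) x) (at x)"
    using assms unfolding differentiable_upto_def by blast
  then show ?thesis
    unfolding differentiable_upto_def
    by (intro exI[of _ "\<lambda>j x. D j x + E j x"]) (auto intro!: derivative_eq_intros)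
qed

lemma differentiable_upto_diff:
  assumes "differentiable_upto k f" "differentiable_upto k g"
  shows "differentiable_upto k (\<lambda>x. f x - g x)"
proof -
  obtain D E where "D 0 = f" "\<forall>j<k. \<forall>x. (D j has_real_derivative D (Suc j) x) (at x)"
    "E 0 = g" "\<forall>j<k. \<forall>x. (E j has_real_derivative E (Suc j) x) (at x)"
    using assms unfolding differentiable_upto_def by blast
  then show ?thesis
    unfolding differentiable_upto_def
    by (intro exI[of _ "\<lambda>j x. D j x - E j x"]) (auto intro!: derivative_eq_intros)
qed

lemma differentiable_upto_affine:
  assumes "differentiable_upto k f"
  shows "differentiable_upto k (\<lambda>x. f (s * x + t))"
proof -
  obtain D where D: "D 0 = f" "\<forall>j<k. \<forall>x. (D j has_real_derivative D (Suc j) x) (at x)"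
    using assms unfolding differentiable_upto_def by blast
  have "((\<lambda>x. s ^ j * D j (s * x + t)) has_real_derivative s ^ Suc j * D (Suc j) (s * x + t))
          (at x)" if "j < k" for j x
  proof -
    have "((\<lambda>x. D j (s * x + t)) has_real_derivative D (Suc j) (s * x + t) * s) (at x)"
      using D(2) that by (auto intro!: DERIV_chain2[where f = "D j"] derivative_eq_intros)
    then show ?thesis
      by (auto intro!: derivative_eq_intros simp: algebra_simps)
  qed
  then show ?thesis
    unfolding differentiable_upto_def using D(1)
    by (intro exI[of _ "\<lambda>j x. s ^ j * D j (s * x + t)"]) auto
qed

lemma differentiable_upto_mult:
  "differentiable_upto k f \<Longrightarrow> differentiable_upto k g \<Longrightarrow> differentiable_upto k (\<lambda>x. f x * g x)"
proof (induction k arbitrary: f g)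
  case 0
  then show ?case by simp
next
  case (Suc k)
  obtain f' where f': "\<forall>x. (f has_real_derivative f' x) (at x)" "differentiable_upto k f'"
    using Suc.prems(1) unfolding differentiable_upto_Suc by blast
  obtain g' where g': "\<forall>x. (g has_real_derivative g' x) (at x)" "differentiable_upto k g'"
    using Suc.prems(2) unfolding differentiable_upto_Suc by blast
  have "differentiable_upto k (\<lambda>x. f' x * g x + f x * g' x)"
    using Suc.IH[OF f'(2) differentiable_upto_SucD[OF Suc.prems(2)]]
      Suc.IH[OF differentiable_upto_SucD[OF Suc.prems(1)] g'(2)]
    by (rule differentiable_upto_add)
  moreover have "\<forall>x. ((\<lambda>x. f x * g x) has_real_derivative f' x * g x + f x * g' x) (at x)"
    using f' g' by (auto intro!: derivative_eq_intros)
  ultimately show ?case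
    unfolding differentiable_upto_Suc by (intro exI[of _ "\<lambda>x. f' x * g x + f x * g' x"]) simp
qed

lemma differentiable_upto_deriv_funpow:
  assumes "differentiable_upto (Suc k) f"
  shows "(deriv ^^ k) f differentiable (at x)"
proof -
  obtain D where D: "D 0 = f" "\<forall>j<Suc k. \<forall>x. (D j has_real_derivative D (Suc j) x) (at x)"
    using assms unfolding differentiable_upto_def by blast
  have "(deriv ^^ j) f = D j" if "j \<le> k" for j
    using that
  proof (induction j)
    case 0
    then show ?case using D(1) by simp
  next
    case (Suc j)
    then have "(deriv ^^ Suc j) f = deriv (D j)" by simp
    also have "\<dots> = D (Suc j)"
      using D(2) Suc.prems by (auto intro!: DERIV_imp_deriv)
    finally show ?case .
  qed
  then show ?thesis
    using D(2) real_differentiable_def by auto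
qed

text \<open>On \<open>t > 0\<close> the \<open>k\<close>-th derivative of \<open>exp (-1/t)\<close> is \<open>P\<^sub>k (1/t) exp (-1/t)\<close>, since
  the derivative of \<open>P (1/t) exp (-1/t)\<close> is \<open>s\<^sup>2 (P s - P' s) exp (-1/t)\<close> with \<open>s = 1/t\<close>.\<close>

definition exp_recip :: "real \<Rightarrow> real" where
  "exp_recip t = (if t > 0 then exp (- 1 / t) else 0)"

fun exp_recip_poly :: "nat \<Rightarrow> real poly" where
  "exp_recip_poly 0 = 1"
| "exp_recip_poly (Suc k) = [:0, 0, 1:] * (exp_recip_poly k - pderiv (exp_recip_poly k))"

definition exp_recip_deriv :: "nat \<Rightarrow> real \<Rightarrow> real" where
  "exp_recip_deriv k t = (if t > 0 then poly (exp_recip_poly k) (1 / t) * exp (- 1 / t) else 0)"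

lemma poly_times_exp_neg_tendsto_0:
  fixes p :: "real poly"
  shows "((\<lambda>s. poly p s * exp (- s)) \<longlongrightarrow> 0) at_top"
proof -
  have "((\<lambda>s. \<Sum>i\<le>degree p. coeff p i * (s ^ i / exp s)) \<longlongrightarrow> (\<Sum>i\<le>degree p. coeff p i * 0)) at_top"
    by (intro tendsto_intros tendsto_power_div_exp_0)
  moreover have "(\<Sum>i\<le>degree p. coeff p i * (s ^ i / exp s)) = poly p s * exp (- s)" for s
    by (simp add: poly_altdef exp_minus divide_inverse sum_distrib_right mult.assoc)
  ultimately show ?thesis by simp
qed

lemma exp_recip_deriv_div_tendsto_0: "((\<lambda>t. exp_recip_deriv k t / t) \<longlongrightarrow> 0) (at_right 0)"
proof -
  have "((\<lambda>t. poly ([:0, 1:] * exp_recip_poly k) (inverse t) * exp (- inverse t)) \<longlongrightarrow> 0) (at_right 0)"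
    using poly_times_exp_neg_tendsto_0 filterlim_inverse_at_top_right by (rule filterlim_compose)
  moreover have "\<forall>\<^sub>F t in at_right 0.
      poly ([:0, 1:] * exp_recip_poly k) (inverse t) * exp (- inverse t) = exp_recip_deriv k t / t"
    using eventually_at_right_less[of "0::real"]
    by eventually_elim (auto simp: exp_recip_deriv_def inverse_eq_divide)
  ultimately show ?thesis by (rule Lim_transform_eventually)
qed

lemma exp_recip_deriv_has_derivative:
  "(exp_recip_deriv k has_real_derivative exp_recip_deriv (Suc k) x) (at x)"
proof -
  consider "x > 0" | "x < 0" | "x = 0" by linarith
  then show ?thesis
  proof cases
    case 1
    let ?P = "exp_recip_poly k"
    have "((\<lambda>t. poly ?P (1 / t) * exp (- 1 / t)) has_real_derivative
        poly (pderiv ?P) (1 / x) * (- 1 / x\<^sup>2) * exp (- 1 / x)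
          + poly ?P (1 / x) * (exp (- 1 / x) * (1 / x\<^sup>2))) (at x)"
      using 1 by (auto intro!: derivative_eq_intros DERIV_chain2[where f = "poly ?P"]
          simp: power2_eq_square field_simps)
    also have "poly (pderiv ?P) (1 / x) * (- 1 / x\<^sup>2) * exp (- 1 / x)
          + poly ?P (1 / x) * (exp (- 1 / x) * (1 / x\<^sup>2)) = exp_recip_deriv (Suc k) x"
      using 1 by (simp add: exp_recip_deriv_def field_simps power2_eq_square)
    finally show ?thesis
      by (rule has_field_derivative_transform_within_open[where S = "{0<..}"])
        (use 1 in \<open>auto simp: exp_recip_deriv_def\<close>)
  next
    case 2
    have "((\<lambda>t. 0) has_real_derivative exp_recip_deriv (Suc k) x) (at x)"
      using 2 by (simp add: exp_recip_deriv_def)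
    then show ?thesis
      by (rule has_field_derivative_transform_within_open[where S = "{..<0}"])
        (use 2 in \<open>auto simp: exp_recip_deriv_def\<close>)
  next
    case 3
    have "((\<lambda>t. (exp_recip_deriv k (0 + t) - exp_recip_deriv k 0) / t) \<longlongrightarrow> 0) (at 0)"
      unfolding filterlim_at_split
    proof
      show "((\<lambda>t. (exp_recip_deriv k (0 + t) - exp_recip_deriv k 0) / t) \<longlongrightarrow> 0) (at_left 0)"
        by (rule Lim_transform_eventually[where f = "\<lambda>t. 0"], simp)
          (use eventually_at_left_real[of "-1" "0::real"] in
            \<open>auto simp: exp_recip_deriv_def elim!: eventually_mono\<close>)
      show "((\<lambda>t. (exp_recip_deriv k (0 + t) - exp_recip_deriv k 0) / t) \<longlongrightarrow> 0) (at_right 0)"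
        using exp_recip_deriv_div_tendsto_0[of k] by (simp add: exp_recip_deriv_def)
    qed
    then show ?thesis
      using 3 by (simp add: DERIV_def exp_recip_deriv_def)
  qed
qed

lemma differentiable_upto_exp_recip: "differentiable_upto k exp_recip"
proof -
  have "exp_recip_deriv 0 = exp_recip"
    by (simp add: exp_recip_deriv_def exp_recip_def fun_eq_iff)
  then show ?thesis
    unfolding differentiable_upto_def using exp_recip_deriv_has_derivative by blast
qed

definition bump :: "real \<Rightarrow> real" where
  "bump u = exp_recip (1 + u) * exp_recip (1 - u)"

lemma differentiable_upto_bump: "differentiable_upto k bump"
proof -
  have affine: "bump = (\<lambda>u. exp_recip (1 * u + 1) * exp_recip ((- 1) * u + 1))"
    by (simp add: bump_def fun_eq_iff add.commute)
  show ?thesis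
    unfolding affine
    by (intro differentiable_upto_mult differentiable_upto_affine differentiable_upto_exp_recip)
qed

lemma bump_nonneg: "bump u \<ge> 0"
  by (simp add: bump_def exp_recip_def)

lemma bump_eq_0: "\<bar>u\<bar> \<ge> 1 \<Longrightarrow> bump u = 0"
  by (auto simp: bump_def exp_recip_def)

lemma bump_0_pos: "bump 0 > 0"
  by (simp add: bump_def exp_recip_def)

lemma continuous_on_bump: "continuous_on S bump"
proof -
  obtain b' where "\<forall>x. (bump has_real_derivative b' x) (at x)"
    using differentiable_upto_bump[of "Suc 0"] unfolding differentiable_upto_Suc by blast
  then show ?thesis
    by (meson DERIV_isCont continuous_at_imp_continuous_on)
qed

text \<open>The lower limit \<open>-2\<close> is any point left of the support \<open>[-1, 1]\<close> of the bump.\<close>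

definition smooth_step :: "real \<Rightarrow> real" where
  "smooth_step u = integral {-2..u} bump"

lemma smooth_step_eq_0: "u \<le> -1 \<Longrightarrow> smooth_step u = 0"
proof -
  assume "u \<le> -1"
  then have "integral {-2..u} bump = integral {-2..u} (\<lambda>t. 0)"
    by (intro integral_cong bump_eq_0) auto
  then show ?thesis by (simp add: smooth_step_def)
qed

lemma smooth_step_eq_1: "u \<ge> 1 \<Longrightarrow> smooth_step u = smooth_step 1"
proof -
  assume u: "u \<ge> 1"
  have "integral {-2..1} bump + integral {1..u} bump = integral {-2..u} bump"
    using u
    by (intro Henstock_Kurzweil_Integration.integral_combine integrable_continuous_interval
        continuous_on_bump) auto
  moreover have "integral {1..u} bump = integral {1..u} (\<lambda>t. 0)"
    by (intro integral_cong bump_eq_0) auto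
  ultimately show ?thesis by (simp add: smooth_step_def)
qed

lemma smooth_step_has_derivative: "(smooth_step has_real_derivative bump u) (at u)"
proof (cases "u > -3/2")
  case True
  have "(smooth_step has_real_derivative bump u) (at u within {-2..u+1})"
    unfolding smooth_step_def using True
    by (intro integral_has_real_derivative continuous_on_bump) auto
  moreover have "at u within {-2..u+1} = at u"
    by (rule at_within_interior) (use True in auto)
  ultimately show ?thesis by simp
next
  case False
  have "((\<lambda>x. 0) has_real_derivative bump u) (at u)"
    using False bump_eq_0[of u] by simp
  then show ?thesis
    by (rule has_field_derivative_transform_within_open[where S = "{..<-1}"])
      (use False in \<open>auto simp: smooth_step_eq_0\<close>)
qed

lemma differentiable_upto_smooth_step: "differentiable_upto k smooth_step"
  using differentiable_upto_SucD smooth_step_has_derivative differentiable_upto_bump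
  unfolding differentiable_upto_Suc by blast

lemma smooth_step_1_pos: "smooth_step 1 > 0"
proof -
  have int: "(bump has_integral smooth_step 1) (cbox (-2) 1)"
    unfolding smooth_step_def
    using integrable_continuous_interval[OF continuous_on_bump] by (simp add: integrable_integral)
  have "smooth_step 1 \<ge> 0"
    unfolding smooth_step_def
    by (intro integral_nonneg integrable_continuous_interval continuous_on_bump bump_nonneg)
  moreover have "smooth_step 1 \<noteq> 0"
  proof
    assume "smooth_step 1 = 0"
    then have "bump 0 = 0"
      using int by (intro has_integral_0_cbox_imp_0[OF continuous_on_bump])
        (auto simp: bump_nonneg box_real)
    then show False using bump_0_pos by simp
  qed
  ultimately show ?thesis by simp
qed

section \<open>The du Bois-Reymond lemma\<close>

lemma continuous_on_scaled_bump: "0 < e \<Longrightarrow> continuous_on S (\<lambda>x. bump ((x - c) / e) / e)"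
  by (intro continuous_intros continuous_on_compose2[OF continuous_on_bump]) auto

lemma integral_scaled_bump:
  assumes e: "0 < e" "a \<le> c - e" "c + e \<le> b"
  shows "integral {a..b} (\<lambda>x. bump ((x - c) / e) / e) = smooth_step 1"
proof -
  have "((\<lambda>x. smooth_step ((x - c) / e)) has_real_derivative bump ((x - c) / e) / e) (at x)" for x
  proof -
    have "((\<lambda>x. (x - c) / e) has_real_derivative 1 / e) (at x)"
      using e by (auto intro!: derivative_eq_intros)
    from DERIV_chain2[OF smooth_step_has_derivative this] show ?thesis
      by simp
  qed
  then have "((\<lambda>x. bump ((x - c) / e) / e) has_integral
      smooth_step ((b - c) / e) - smooth_step ((a - c) / e)) {a..b}"
    using e by (intro fundamental_theorem_of_calculus)
      (auto simp: has_real_derivative_iff_has_vector_derivative[symmetric]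
        intro: has_field_derivative_at_within)
  moreover have "smooth_step ((b - c) / e) = smooth_step 1"
    using e by (intro smooth_step_eq_1) (simp add: field_simps)
  moreover have "smooth_step ((a - c) / e) = 0"
    using e by (intro smooth_step_eq_0) (simp add: field_simps)
  ultimately have "((\<lambda>x. bump ((x - c) / e) / e) has_integral smooth_step 1) {a..b}"
    by simp
  then show ?thesis
    by (rule integral_unique)
qed

lemma integral_times_scaled_bump_approx:
  fixes G :: "real \<Rightarrow> real"
  assumes e: "0 < e" "a \<le> c - e" "c + e \<le> b" and G: "continuous_on {a..b} G"
    and close: "\<And>x. x \<in> {a..b} \<Longrightarrow> \<bar>x - c\<bar> < e \<Longrightarrow> \<bar>G x - G c\<bar> \<le> \<eta>"
  shows "\<bar>integral {a..b} (\<lambda>x. G x * (bump ((x - c) / e) / e)) - G c * smooth_step 1\<bar>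
           \<le> \<eta> * smooth_step 1"
proof -
  define k where "k x = bump ((x - c) / e) / e" for x
  have k_cont: "continuous_on {a..b} k"
    unfolding k_def using e(1) by (rule continuous_on_scaled_bump)
  have k_int: "integral {a..b} k = smooth_step 1"
    unfolding k_def using e by (rule integral_scaled_bump)
  have "integral {a..b} (\<lambda>x. G x * k x) - G c * smooth_step 1
      = integral {a..b} (\<lambda>x. (G x - G c) * k x)"
    using k_int
    by (simp add: left_diff_distrib integral_diff integrable_continuous_interval
        continuous_intros G k_cont)
  also have "\<bar>\<dots>\<bar> \<le> integral {a..b} (\<lambda>x. \<eta> * k x)"
  proof (rule integral_norm_bound_integral[of "\<lambda>x. (G x - G c) * k x", unfolded real_norm_def])
    show "(\<lambda>x. (G x - G c) * k x) integrable_on {a..b}" "(\<lambda>x. \<eta> * k x) integrable_on {a..b}"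
      by (intro integrable_continuous_interval continuous_intros G k_cont)+
    fix x assume x: "x \<in> {a..b}"
    have "k x \<ge> 0" unfolding k_def using e by (simp add: bump_nonneg)
    moreover have "k x = 0" if "\<bar>x - c\<bar> \<ge> e"
      using that e by (simp add: k_def bump_eq_0 abs_div field_simps)
    ultimately show "\<bar>(G x - G c) * k x\<bar> \<le> \<eta> * k x"
      using close[OF x] by (cases "\<bar>x - c\<bar> < e") (auto simp: abs_mult mult_right_mono)
  qed
  also have "\<dots> = \<eta> * smooth_step 1"
    using k_int by simp
  finally show ?thesis unfolding k_def .
qed

lemma test_fun_smooth_step_diff:
  assumes "0 < e" "a < c - e" "c < d" "d + e < b"
  defines "\<psi> \<equiv> \<lambda>x. smooth_step ((x - c) / e) - smooth_step ((x - d) / e)"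
  shows "test_fun a b \<psi>"
    and "deriv \<psi> x = bump ((x - c) / e) / e - bump ((x - d) / e) / e"
proof -
  have affine:
    "\<psi> = (\<lambda>x. smooth_step ((1 / e) * x + (- c / e)) - smooth_step ((1 / e) * x + (- d / e)))"
    unfolding \<psi>_def by (simp add: diff_divide_distrib)
  have "differentiable_upto k \<psi>" for k
    unfolding affine
    by (intro differentiable_upto_diff differentiable_upto_affine differentiable_upto_smooth_step)
  then have "\<forall>k x. (deriv ^^ k) \<psi> differentiable (at x)"
    using differentiable_upto_deriv_funpow by blast
  moreover have "\<forall>x. x \<notin> {c - e..d + e} \<longrightarrow> \<psi> x = 0"
  proof (intro allI impI)
    fix x assume "x \<notin> {c - e..d + e}"
    then consider "x < c - e" | "x > d + e" by auto
    then show "\<psi> x = 0"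
    proof cases
      case 1
      then have "(x - c) / e \<le> -1" "(x - d) / e \<le> -1"
        using assms by (simp_all add: field_simps)
      then show ?thesis unfolding \<psi>_def by (simp add: smooth_step_eq_0)
    next
      case 2
      then have "(x - c) / e \<ge> 1" "(x - d) / e \<ge> 1"
        using assms by (simp_all add: field_simps)
      then show ?thesis
        unfolding \<psi>_def using smooth_step_eq_1[of "(x - c) / e"] smooth_step_eq_1[of "(x - d) / e"]
        by simp
    qed
  qed
  ultimately show "test_fun a b \<psi>"
    unfolding test_fun_def using assms by (intro conjI exI[of _ "c - e"] exI[of _ "d + e"]) auto
  have "((\<lambda>x. (x - u) / e) has_real_derivative 1 / e) (at x)" for u
    using assms by (auto intro!: derivative_eq_intros)
  then have "(\<psi> has_real_derivative bump ((x - c) / e) * (1 / e) - bump ((x - d) / e) * (1 / e))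
      (at x)"
    unfolding \<psi>_def by (intro DERIV_diff DERIV_chain2[OF smooth_step_has_derivative])
  then show "deriv \<psi> x = bump ((x - c) / e) / e - bump ((x - d) / e) / e"
    by (intro DERIV_imp_deriv) simp
qed

lemma du_Bois_Reymond_estimate:
  fixes G :: "real \<Rightarrow> real"
  assumes e: "0 < e" "a < c - e" "c < d" "d + e < b" and G: "continuous_on {a..b} G"
    and orth: "\<And>\<psi>. test_fun a b \<psi> \<Longrightarrow> integral {a..b} (\<lambda>x. G x * deriv \<psi> x) = 0"
    and close_c: "\<And>x. x \<in> {a..b} \<Longrightarrow> \<bar>x - c\<bar> < e \<Longrightarrow> \<bar>G x - G c\<bar> \<le> \<eta>"
    and close_d: "\<And>x. x \<in> {a..b} \<Longrightarrow> \<bar>x - d\<bar> < e \<Longrightarrow> \<bar>G x - G d\<bar> \<le> \<eta>"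
  shows "\<bar>G c - G d\<bar> \<le> 2 * \<eta>"
proof -
  define \<psi> where "\<psi> = (\<lambda>x. smooth_step ((x - c) / e) - smooth_step ((x - d) / e))"
  define I where "I u = integral {a..b} (\<lambda>x. G x * (bump ((x - u) / e) / e))" for u
  have "0 = integral {a..b} (\<lambda>x. G x * deriv \<psi> x)"
    using orth test_fun_smooth_step_diff(1)[OF e] unfolding \<psi>_def by simp
  also have "\<dots> = I c - I d"
    unfolding \<psi>_def test_fun_smooth_step_diff(2)[OF e] right_diff_distrib I_def
    by (intro integral_diff integrable_continuous_interval continuous_intros G
        continuous_on_scaled_bump e(1))
  finally have "I c = I d"
    by simp
  moreover have "\<bar>I c - G c * smooth_step 1\<bar> \<le> \<eta> * smooth_step 1"
    unfolding I_def using e by (intro integral_times_scaled_bump_approx G close_c) auto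
  moreover have "\<bar>I d - G d * smooth_step 1\<bar> \<le> \<eta> * smooth_step 1"
    unfolding I_def using e by (intro integral_times_scaled_bump_approx G close_d) auto
  moreover have "\<bar>G c * smooth_step 1 - G d * smooth_step 1\<bar> = \<bar>G c - G d\<bar> * smooth_step 1"
    using smooth_step_1_pos by (simp add: abs_mult flip: left_diff_distrib)
  ultimately have "\<bar>G c - G d\<bar> * smooth_step 1 \<le> (2 * \<eta>) * smooth_step 1"
    by linarith
  then show ?thesis
    using smooth_step_1_pos by simp
qed

lemma du_Bois_Reymond_interior:
  fixes G :: "real \<Rightarrow> real"
  assumes cd: "a < c" "c < d" "d < b" and G: "continuous_on {a..b} G"
    and orth: "\<And>\<psi>. test_fun a b \<psi> \<Longrightarrow> integral {a..b} (\<lambda>x. G x * deriv \<psi> x) = 0"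
  shows "G c = G d"
proof -
  have "\<bar>G c - G d\<bar> \<le> 2 * \<eta>" if "\<eta> > 0" for \<eta>
  proof -
    have near: "\<exists>\<delta>>0. \<forall>x\<in>{a..b}. dist x u < \<delta> \<longrightarrow> dist (G x) (G u) < \<eta>"
      if "u \<in> {a..b}" for u
      using G that \<open>\<eta> > 0\<close> unfolding continuous_on_iff by blast
    obtain \<delta>c where "\<delta>c > 0" and \<delta>c: "\<forall>x\<in>{a..b}. dist x c < \<delta>c \<longrightarrow> dist (G x) (G c) < \<eta>"
      using near[of c] cd by auto
    obtain \<delta>d where "\<delta>d > 0" and \<delta>d: "\<forall>x\<in>{a..b}. dist x d < \<delta>d \<longrightarrow> dist (G x) (G d) < \<eta>"
      using near[of d] cd by auto
    define m where "m = min (min \<delta>c \<delta>d) (min (c - a) (b - d))"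
    have "0 < m" "m \<le> \<delta>c" "m \<le> \<delta>d" "m \<le> c - a" "m \<le> b - d"
      using \<open>\<delta>c > 0\<close> \<open>\<delta>d > 0\<close> cd by (auto simp: m_def)
    then have e: "0 < m / 2" "m / 2 < \<delta>c" "m / 2 < \<delta>d" "a < c - m / 2" "d + m / 2 < b"
      by linarith+
    have close_c: "\<bar>G x - G c\<bar> \<le> \<eta>" if "x \<in> {a..b}" "\<bar>x - c\<bar> < m / 2" for x
      using \<delta>c that e(2) unfolding dist_real_def by force
    have close_d: "\<bar>G x - G d\<bar> \<le> \<eta>" if "x \<in> {a..b}" "\<bar>x - d\<bar> < m / 2" for x
      using \<delta>d that e(3) unfolding dist_real_def by force
    show ?thesis
      by (rule du_Bois_Reymond_estimate[OF e(1,4) cd(2) e(5) G orth close_c close_d])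
  qed
  from this[of "\<bar>G c - G d\<bar> / 4"] show ?thesis
    by (cases "G c = G d") auto
qed

lemma du_Bois_Reymond:
  fixes G :: "real \<Rightarrow> real"
  assumes "a < b" and G: "continuous_on {a..b} G"
    and orth: "\<And>\<psi>. test_fun a b \<psi> \<Longrightarrow> integral {a..b} (\<lambda>x. G x * deriv \<psi> x) = 0"
    and "x \<in> {a..b}"
  shows "G x = G ((a + b) / 2)"
proof (rule continuous_constant_on_closure[where S = "{a<..<b}" and f = G])
  show "G y = G ((a + b) / 2)" if y: "y \<in> {a<..<b}" for y
  proof (cases y "(a + b) / 2" rule: linorder_cases)
    case less
    then show ?thesis
      using y du_Bois_Reymond_interior[OF _ _ _ G orth, of y "(a + b) / 2"] by auto
  next
    case equal
    then show ?thesis by (rule arg_cong)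
  next
    case greater
    then show ?thesis
      using y du_Bois_Reymond_interior[OF _ _ _ G orth, of "(a + b) / 2" y] by auto
  qed
qed (use assms in auto)

lemma distr_primitive_unique:
  assumes ab: "a < b" and F1: "distr_primitive a b T F1" and F2: "distr_primitive a b T F2"
    and x: "x \<in> {a..b}"
  shows "F1 x = F2 x"
proof -
  have cont: "continuous_on {a..b} F1" "continuous_on {a..b} F2" and "F1 a = 0" "F2 a = 0"
    using F1 F2 by (auto simp: distr_primitive_def C0_def)
  then have diff_cont: "continuous_on {a..b} (\<lambda>x. F1 x - F2 x)"
    by (intro continuous_intros)
  have orth: "integral {a..b} (\<lambda>x. (F1 x - F2 x) * deriv \<psi> x) = 0" if \<psi>: "test_fun a b \<psi>" for \<psi>
  proof -
    have "(deriv ^^ Suc 0) \<psi> differentiable (at x)" for x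
      using \<psi> unfolding test_fun_def by blast
    then have "isCont (deriv \<psi>) x" for x
      by (simp add: differentiable_imp_continuous_within)
    then have "continuous_on {a..b} (deriv \<psi>)"
      by (rule continuous_at_imp_continuous_on[rule_format])
    then have "integral {a..b} (\<lambda>x. (F1 x - F2 x) * deriv \<psi> x)
        = integral {a..b} (\<lambda>x. F1 x * deriv \<psi> x) - integral {a..b} (\<lambda>x. F2 x * deriv \<psi> x)"
      unfolding left_diff_distrib
      by (intro integral_diff integrable_continuous_interval continuous_intros cont)
    also have "\<dots> = 0"
    proof -
      have "T \<psi> = - integral {a..b} (\<lambda>x. F1 x * deriv \<psi> x)"
        "T \<psi> = - integral {a..b} (\<lambda>x. F2 x * deriv \<psi> x)"
        using F1 F2 \<psi> unfolding distr_primitive_def by blast+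
      then show ?thesis by linarith
    qed
    finally show ?thesis .
  qed
  have "F1 x - F2 x = F1 ((a + b) / 2) - F2 ((a + b) / 2)"
    by (rule du_Bois_Reymond[OF ab diff_cont orth x])
  moreover have "F1 a - F2 a = F1 ((a + b) / 2) - F2 ((a + b) / 2)"
    using du_Bois_Reymond[OF ab diff_cont orth, of a] ab by simp
  ultimately show ?thesis
    using \<open>F1 a = 0\<close> \<open>F2 a = 0\<close> by simp
qed

lemma hk_int_mult_eq:
  assumes "a < b" and F: "distr_primitive a b \<phi> F" and "x \<in> {a..b}"
  shows "hk_int_mult a b \<phi> g x = F x * g x - integral {a..x} (\<lambda>t. F t * deriv g t)"
  unfolding hk_int_mult_def
proof (rule the_equality)
  show "\<exists>F'. distr_primitive a b \<phi> F' \<and>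
          F x * g x - integral {a..x} (\<lambda>t. F t * deriv g t) =
          F' x * g x - integral {a..x} (\<lambda>t. F' t * deriv g t)"
    using F by blast
next
  fix v
  assume "\<exists>F'. distr_primitive a b \<phi> F' \<and> v = F' x * g x - integral {a..x} (\<lambda>t. F' t * deriv g t)"
  then obtain F' where F': "distr_primitive a b \<phi> F'"
    and v: "v = F' x * g x - integral {a..x} (\<lambda>t. F' t * deriv g t)"
    by blast
  have F'_eq: "F' t = F t" if "t \<in> {a..x}" for t
    using distr_primitive_unique[OF \<open>a < b\<close> F' F] that assms(3) by auto
  then have "integral {a..x} (\<lambda>t. F' t * deriv g t) = integral {a..x} (\<lambda>t. F t * deriv g t)"
    by (intro integral_cong) simp
  then show "v = F x * g x - integral {a..x} (\<lambda>t. F t * deriv g t)"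
    unfolding v using F'_eq assms(3) by simp
qed

section \<open>Repeated integration\<close>

primrec iter_integral :: "real \<Rightarrow> nat \<Rightarrow> (real \<Rightarrow> real) \<Rightarrow> real \<Rightarrow> real" where
  "iter_integral a 0 F = F"
| "iter_integral a (Suc k) F = (\<lambda>x. integral {a..x} (iter_integral a k F))"

lemma iter_integral_Suc_right:
  "iter_integral a (Suc k) F = iter_integral a k (\<lambda>x. integral {a..x} F)"
  by (induction k) simp_all

lemma continuous_on_iter_integral:
  "continuous_on {a..b} F \<Longrightarrow> continuous_on {a..b} (iter_integral a k F)"
  by (induction k) (auto intro: indefinite_integral_continuous_1 integrable_continuous_interval)

lemma iter_integral_has_derivative:
  assumes "continuous_on {a..b} F" and "x \<in> {a..b}"
  shows "(iter_integral a (Suc k) F has_real_derivative iter_integral a k F x) (at x within {a..b})"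
  using assms by (auto intro: integral_has_real_derivative continuous_on_iter_integral)

lemma power_kernel_has_derivative:
  "((\<lambda>t. (x - t) ^ Suc k) has_real_derivative - (real (Suc k) * (x - t) ^ k)) (at t)"
  by (rule derivative_eq_intros refl)+ (simp add: algebra_simps)

lemma integral_power_kernel_const:
  assumes "a \<le> x"
  shows "integral {a..x} (\<lambda>t. (x - t) ^ k) = (x - a) ^ Suc k / real (Suc k)"
proof -
  have "((\<lambda>t. - ((x - t) ^ Suc k / real (Suc k))) has_real_derivative (x - t) ^ k) (at t)" for t
  proof -
    note kernel = power_kernel_has_derivative[of x k t]
    from DERIV_minus[OF DERIV_cdivide[OF kernel, of "real (Suc k)"]] show ?thesis
      by (simp del: of_nat_Suc)
  qed
  then have "((\<lambda>t. (x - t) ^ k) has_integral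
      (- ((x - x) ^ Suc k / real (Suc k))) - (- ((x - a) ^ Suc k / real (Suc k)))) {a..x}"
    using assms by (intro fundamental_theorem_of_calculus)
      (auto simp: has_real_derivative_iff_has_vector_derivative[symmetric]
        intro: has_field_derivative_at_within)
  then show ?thesis by (simp add: integral_unique)
qed

lemma integral_power_kernel_by_parts:
  assumes F: "continuous_on {a..x} F" and "a \<le> x"
  shows "integral {a..x} (\<lambda>t. F t * (x - t) ^ Suc j)
           = real (Suc j) * integral {a..x} (\<lambda>t. integral {a..t} F * (x - t) ^ j)"
proof -
  define \<Phi> where "\<Phi> t = integral {a..t} F" for t
  have \<Phi>_cont: "continuous_on {a..x} \<Phi>"
    unfolding \<Phi>_def by (intro indefinite_integral_continuous_1 integrable_continuous_interval F)
  have "((\<lambda>t. F t * (x - t) ^ Suc j) has_integral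
          real (Suc j) * integral {a..x} (\<lambda>t. \<Phi> t * (x - t) ^ j)) {a..x}"
  proof (rule integration_by_parts_interior[OF bounded_bilinear_mult \<open>a \<le> x\<close> \<Phi>_cont,
        where g = "\<lambda>t. (x - t) ^ Suc j" and g' = "\<lambda>t. - (real (Suc j) * (x - t) ^ j)"])
    fix t assume t: "t \<in> {a<..<x}"
    have "(\<Phi> has_real_derivative F t) (at t within {a..x})"
      unfolding \<Phi>_def by (rule integral_has_real_derivative[OF F]) (use t in auto)
    moreover have "at t within {a..x} = at t"
      by (rule at_within_interior) (use t in auto)
    ultimately show "(\<Phi> has_vector_derivative F t) (at t)"
      by (simp add: has_real_derivative_iff_has_vector_derivative)
    from power_kernel_has_derivative
    show "((\<lambda>t. (x - t) ^ Suc j) has_vector_derivative - (real (Suc j) * (x - t) ^ j)) (at t)"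
      by (simp add: has_real_derivative_iff_has_vector_derivative)
  next
    have "((\<lambda>t. \<Phi> t * (x - t) ^ j) has_integral integral {a..x} (\<lambda>t. \<Phi> t * (x - t) ^ j)) {a..x}"
      by (intro integrable_integral integrable_continuous_interval continuous_intros \<Phi>_cont)
    from has_integral_neg[OF has_integral_mult_right[OF this, of "real (Suc j)"]]
    show "((\<lambda>t. \<Phi> t * - (real (Suc j) * (x - t) ^ j)) has_integral
        \<Phi> x * (x - x) ^ Suc j - \<Phi> a * (x - a) ^ Suc j
          - real (Suc j) * integral {a..x} (\<lambda>t. \<Phi> t * (x - t) ^ j)) {a..x}"
      by (simp add: \<Phi>_def algebra_simps)
  qed (intro continuous_intros)
  then show ?thesis
    unfolding \<Phi>_def by (rule integral_unique)
qed

lemma iter_integral_Cauchy_formula: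
  assumes "continuous_on {a..x} F" and "a \<le> x"
  shows "iter_integral a (Suc k) F x = integral {a..x} (\<lambda>t. F t * (x - t) ^ k) / fact k"
  using assms(1)
proof (induction k arbitrary: F)
  case 0
  then show ?case by simp
next
  case (Suc k)
  have "continuous_on {a..x} (\<lambda>t. integral {a..t} F)"
    using Suc.prems by (intro indefinite_integral_continuous_1 integrable_continuous_interval)
  then have "iter_integral a (Suc (Suc k)) F x
      = integral {a..x} (\<lambda>t. integral {a..t} F * (x - t) ^ k) / fact k"
    by (simp only: iter_integral_Suc_right[of a "Suc k"] Suc.IH)
  also have "\<dots> = integral {a..x} (\<lambda>t. F t * (x - t) ^ Suc k) / fact (Suc k)"
    using integral_power_kernel_by_parts[OF Suc.prems assms(2), of k]
    by (simp add: field_simps del: of_nat_Suc)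
  finally show ?case .
qed

lemma hk_int_mult_power_kernel:
  assumes "a < b" and F: "distr_primitive a b \<phi> F" and x: "x \<in> {a..b}"
  shows "1 / fact m * hk_int_mult a b \<phi> (\<lambda>t. (x - t) ^ m) x = iter_integral a m F x"
proof -
  have deriv_kernel: "deriv (\<lambda>t. (x - t) ^ m) t = - (real m * (x - t) ^ (m - 1))" for t
    by (rule DERIV_imp_deriv) (auto intro!: derivative_eq_intros)
  have "(\<lambda>t. F t * deriv (\<lambda>t. (x - t) ^ m) t) = (\<lambda>t. - (real m *\<^sub>R (F t * (x - t) ^ (m - 1))))"
    by (simp add: deriv_kernel fun_eq_iff)
  then have hk: "hk_int_mult a b \<phi> (\<lambda>t. (x - t) ^ m) x
      = F x * 0 ^ m + real m * integral {a..x} (\<lambda>t. F t * (x - t) ^ (m - 1))"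
    unfolding hk_int_mult_eq[OF assms] by simp
  show ?thesis
  proof (cases m)
    case 0
    then show ?thesis using hk by simp
  next
    case (Suc k)
    have "continuous_on {a..x} F"
      using F x unfolding distr_primitive_def C0_def by (auto elim: continuous_on_subset)
    have "1 / fact m * hk_int_mult a b \<phi> (\<lambda>t. (x - t) ^ m) x
        = real (Suc k) * integral {a..x} (\<lambda>t. F t * (x - t) ^ k) / fact (Suc k)"
      using hk Suc by simp
    also have "\<dots> = integral {a..x} (\<lambda>t. F t * (x - t) ^ k) / fact k"
      by (simp only: fact_Suc of_nat_mult) (simp add: field_simps del: of_nat_Suc)
    also have "\<dots> = iter_integral a m F x"
      using iter_integral_Cauchy_formula[OF \<open>continuous_on {a..x} F\<close>] x Suc by simp
    finally show ?thesis .
  qed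
qed

lemma Taylor_iter_integral:
  assumes D: "\<And>k t. k < m \<Longrightarrow> t \<in> {a..x} \<Longrightarrow>
                (D k has_real_derivative D (Suc k) t) (at t within {a..x})"
    and Dm: "continuous_on {a..x} (D m)" and "a \<le> x"
  shows "D 0 x = iter_integral a m (\<lambda>t. D m t - D m a) x + (\<Sum>k<Suc m. D k a / fact k * (x - a) ^ k)"
proof (cases m)
  case 0
  then show ?thesis by simp
next
  case (Suc i)
  define F where "F = (\<lambda>t. D m t - D m a)"
  have F_cont: "continuous_on {a..x} F"
    unfolding F_def using Dm by (intro continuous_intros)
  have "D 0 x = (\<Sum>k<m. D k a / fact k * (x - a) ^ k)
                + integral {a..x} (\<lambda>t. (x - t) ^ i / fact i * D m t)"
  proof -
    have "(D k has_vector_derivative D (Suc k) t) (at t within {a..x})"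
      if "k < m" "a \<le> t" "t \<le> x" for k t
      using D[of k t] that by (simp add: has_real_derivative_iff_has_vector_derivative)
    from Taylor_integral[where p = m and f = "D 0" and Df = D and a = a and b = x,
        OF _ refl this \<open>a \<le> x\<close>] show ?thesis
      using Suc by (simp add: mult.commute)
  qed
  also have "integral {a..x} (\<lambda>t. (x - t) ^ i / fact i * D m t)
      = integral {a..x} (\<lambda>t. F t * (x - t) ^ i) / fact i
        + D m a / fact i * integral {a..x} (\<lambda>t. (x - t) ^ i)"
  proof -
    have "(\<lambda>t. (x - t) ^ i / fact i * D m t)
        = (\<lambda>t. F t * (x - t) ^ i / fact i + D m a / fact i * (x - t) ^ i)"
      by (simp add: F_def fun_eq_iff field_simps)
    then show ?thesis
      by (simp add: integral_add integrable_continuous_interval continuous_intros F_cont)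
  qed
  also have "integral {a..x} (\<lambda>t. F t * (x - t) ^ i) / fact i = iter_integral a m F x"
    using iter_integral_Cauchy_formula[OF F_cont \<open>a \<le> x\<close>, of i] Suc by simp
  also have "D m a / fact i * integral {a..x} (\<lambda>t. (x - t) ^ i) = D m a / fact m * (x - a) ^ m"
    unfolding integral_power_kernel_const[OF \<open>a \<le> x\<close>] Suc fact_Suc of_nat_mult
    by (simp add: field_simps del: of_nat_Suc)
  finally show ?thesis
    unfolding F_def by (simp add: ac_simps)
qed

section \<open>The spaces \<open>\<C>\<^sup>n[a,b]\<close>\<close>

lemma Cn_cong: "(\<And>x. x \<in> {a..b} \<Longrightarrow> f x = g x) \<Longrightarrow> Cn a b n f \<Longrightarrow> Cn a b n g"
  unfolding Cn_def by metis

lemma Cn_add: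
  assumes "Cn a b n f" and "Cn a b n g"
  shows "Cn a b n (\<lambda>x. f x + g x)"
proof -
  obtain D E where "\<forall>x\<in>{a..b}. D 0 x = f x" "\<forall>x\<in>{a..b}. E 0 x = g x"
    "\<forall>k. k + 1 < n \<longrightarrow> (\<forall>x\<in>{a..b}. (D k has_real_derivative D (Suc k) x) (at x within {a..b}))"
    "\<forall>k. k + 1 < n \<longrightarrow> (\<forall>x\<in>{a..b}. (E k has_real_derivative E (Suc k) x) (at x within {a..b}))"
    "continuous_on {a..b} (D (n - 1))" "continuous_on {a..b} (E (n - 1))"
    using assms unfolding Cn_def by metis
  then show ?thesis
    unfolding Cn_def
    by (intro exI[of _ "\<lambda>k x. D k x + E k x"]) (auto intro!: derivative_eq_intros continuous_intros)
qed

lemma Cn_poly_shift: "Cn a b n (\<lambda>x. poly p (x - c))"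
proof -
  have "((\<lambda>x. poly q (x - c)) has_real_derivative poly (pderiv q) (x - c)) (at x within S)"
    for q :: "real poly" and x S
  proof -
    have "((\<lambda>x. x - c) has_real_derivative 1) (at x)"
      by (auto intro!: derivative_eq_intros)
    from DERIV_chain2[OF poly_DERIV this] show ?thesis
      by (auto intro: has_field_derivative_at_within)
  qed
  then show ?thesis
    unfolding Cn_def
    by (intro exI[of _ "\<lambda>k x. poly ((pderiv ^^ k) p) (x - c)"]) (auto intro!: continuous_intros)
qed

lemma Cn_iter_integral:
  assumes "continuous_on {a..b} F"
  shows "Cn a b (Suc m) (iter_integral a m F)"
  unfolding Cn_def
proof (intro exI[of _ "\<lambda>k. iter_integral a (m - k) F"] conjI allI impI ballI)
  fix k x assume "k + 1 < Suc m" "x \<in> {a..b}"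
  then show "(iter_integral a (m - k) F has_real_derivative iter_integral a (m - Suc k) F x)
               (at x within {a..b})"
    using iter_integral_has_derivative[OF assms, of x "m - Suc k"] by (simp add: Suc_diff_Suc)
qed (use assms in simp_all)

lemma Cn_imp_iter_integral_Taylor:
  assumes "Cn a b (Suc m) f"
  shows "\<exists>F c. F \<in> C0 a b \<and>
           (\<forall>x\<in>{a..b}. f x = iter_integral a m F x + (\<Sum>k<Suc m. c k * (x - a) ^ k))"
proof -
  obtain D where D0: "\<forall>x\<in>{a..b}. D 0 x = f x"
    and D: "\<And>k x. k < m \<Longrightarrow> x \<in> {a..b} \<Longrightarrow>
              (D k has_real_derivative D (Suc k) x) (at x within {a..b})"
    and Dm: "continuous_on {a..b} (D m)"
    using assms unfolding Cn_def by auto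
  have "f x = iter_integral a m (\<lambda>t. D m t - D m a) x + (\<Sum>k<Suc m. D k a / fact k * (x - a) ^ k)"
    if x: "x \<in> {a..b}" for x
  proof -
    have sub: "{a..x} \<subseteq> {a..b}"
      using x by auto
    have "(D k has_real_derivative D (Suc k) t) (at t within {a..x})"
      if "k < m" "t \<in> {a..x}" for k t
      using D[of k t] that sub by (auto intro: has_field_derivative_subset)
    then have "D 0 x = iter_integral a m (\<lambda>t. D m t - D m a) x
                        + (\<Sum>k<Suc m. D k a / fact k * (x - a) ^ k)"
      using x by (intro Taylor_iter_integral continuous_on_subset[OF Dm sub]) auto
    then show ?thesis
      using D0 x by simp
  qed
  moreover have "(\<lambda>t. D m t - D m a) \<in> C0 a b"
    using Dm by (simp add: C0_def continuous_intros)
  ultimately show ?thesis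
    by (intro exI[of _ "\<lambda>t. D m t - D m a"] exI[of _ "\<lambda>k. D k a / fact k"]) auto
qed

lemma Cn_imp_hk_representation:
  assumes "a < b" and "Cn a b (Suc m) f"
  shows "\<exists>\<phi> c. \<phi> \<in> D_HK a b \<and>
           (\<forall>x\<in>{a..b}. f x = 1 / fact m * hk_int_mult a b \<phi> (\<lambda>t. (x - t) ^ m) x
                              + (\<Sum>k<Suc m. c k * (x - a) ^ k))"
proof -
  obtain F c where "F \<in> C0 a b"
    and f: "\<forall>x\<in>{a..b}. f x = iter_integral a m F x + (\<Sum>k<Suc m. c k * (x - a) ^ k)"
    using Cn_imp_iter_integral_Taylor[OF assms(2)] by blast
  define \<phi> where "\<phi> \<psi> = - integral {a..b} (\<lambda>x. F x * deriv \<psi> x)" for \<psi>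
  have F: "distr_primitive a b \<phi> F"
    using \<open>F \<in> C0 a b\<close> by (simp add: distr_primitive_def \<phi>_def)
  then have "\<phi> \<in> D_HK a b"
    unfolding D_HK_def by blast
  moreover have "\<forall>x\<in>{a..b}. f x = 1 / fact m * hk_int_mult a b \<phi> (\<lambda>t. (x - t) ^ m) x
                                  + (\<Sum>k<Suc m. c k * (x - a) ^ k)"
    using f hk_int_mult_power_kernel[OF assms(1) F] by simp
  ultimately show ?thesis
    by blast
qed

lemma hk_representation_imp_Cn:
  assumes "a < b" and "\<phi> \<in> D_HK a b"
    and f: "\<forall>x\<in>{a..b}. f x = 1 / fact m * hk_int_mult a b \<phi> (\<lambda>t. (x - t) ^ m) x
                              + (\<Sum>k<Suc m. c k * (x - a) ^ k)"
  shows "Cn a b (Suc m) f"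
proof -
  obtain F where F: "distr_primitive a b \<phi> F"
    using assms(2) unfolding D_HK_def by blast
  then have "continuous_on {a..b} F"
    by (simp add: distr_primitive_def C0_def)
  then have "Cn a b (Suc m) (\<lambda>x. iter_integral a m F x + poly (\<Sum>k<Suc m. monom (c k) k) (x - a))"
    by (intro Cn_add Cn_iter_integral Cn_poly_shift)
  moreover have "iter_integral a m F x + poly (\<Sum>k<Suc m. monom (c k) k) (x - a) = f x"
    if "x \<in> {a..b}" for x
    using f hk_int_mult_power_kernel[OF assms(1) F that] that by (simp add: poly_sum poly_monom)
  ultimately show ?thesis
    by (rule Cn_cong[rotated])
qed

theorem lemma4p16:
  fixes a b :: real and n :: nat and f :: "real \<Rightarrow> real"
  assumes "a < b" and "n \<ge> 1"
  shows "Cn a b n f \<longleftrightarrow>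
    (\<exists>\<phi> c. \<phi> \<in> D_HK a b \<and>
       (\<forall>x\<in>{a..b}. f x = 1 / fact (n - 1) * hk_int_mult a b \<phi> (\<lambda>t. (x - t) ^ (n - 1)) x
                          + (\<Sum>k<n. c k * (x - a) ^ k)))"
proof -
  obtain m where "n = Suc m"
    using assms(2) by (cases n) auto
  then show ?thesis
    using Cn_imp_hk_representation[OF assms(1)] hk_representation_imp_Cn[OF assms(1)]
    by auto
qed

end
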